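(* Let $n=2^s$, $q=2^r$ ($s,r$ positive integers) and $N=q^{\binom{n}{2}}\prod_{j=2}^{n}(q^j-1)=|SL(n,q)|$. For $a\in\mathbb{F}_q^*$, the Hamming weight of the codeword $c(a)=(tr(a\,Tr(g_1)),\dots,tr(a\,Tr(g_N)))\in\mathbb{F}_2^N$ is \[ w(c(a))=\tfrac12\Big(N-q^{\binom{n}{2}}K_{n-1}(\lambda;a)\Big). \]
   Context: $\mathbb{F}_q$ is the field with $q$ elements, $tr$ the absolute trace to $\mathbb{F}_2$, $\lambda(x)=(-1)^{tr(x)}$. $g_1,\dots,g_N$ is an ordering of $SL(n,q)$ and $Tr$ the matrix trace. For $m\ge1$, $K_m(\lambda;a)=\sum_{\alpha_1,\dots,\alpha_m\in\mathbb{F}_q^*}\lambda(\alpha_1+\cdots+\alpha_m+a\alpha_1^{-1}\cdots\alpha_m^{-1})$. *)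

theory Defs
  imports "HOL-Analysis.Analysis" "HOL-Library.FuncSet"
begin

definition abs_tr :: "nat \<Rightarrow> 'a::field \<Rightarrow> 'a" where
  "abs_tr r x = (\<Sum>i<r. x ^ (2 ^ i))"

text \<open>The additive character lambda(x) = (-1)^(tr x); tr x lies in F_2 = {0,1}.\<close>
definition lam :: "nat \<Rightarrow> 'a::field \<Rightarrow> int" where
  "lam r x = (if abs_tr r x = 0 then 1 else -1)"

definition kloosterman :: "nat \<Rightarrow> nat \<Rightarrow> 'a::{field,finite} \<Rightarrow> int" where
  "kloosterman r m a =
     (\<Sum>\<alpha>\<in>(PiE {..<m} (\<lambda>_. UNIV - {0})).
        lam r ((\<Sum>i<m. \<alpha> i) + a * inverse (\<Prod>i<m. \<alpha> i)))"

definition SL :: "('a::{field,finite}^'n^'n) set" where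
  "SL = {g. det g = 1}"

text \<open>Hamming weight of the codeword c(a) = (tr(a Tr g_1), ..., tr(a Tr g_N)):
  the number of g in SL(n,q) whose coordinate is nonzero (independent of the ordering).\<close>
definition codeword_weight :: "nat \<Rightarrow> 'a::{field,finite} \<Rightarrow> ('a^'n^'n) itself \<Rightarrow> nat" where
  "codeword_weight r a _ = card {g::'a^'n^'n. g \<in> SL \<and> abs_tr r (a * trace g) \<noteq> 0}"

end

theory Submission
  imports Defs "HOL-Number_Theory.Residues" "HOL-Computational_Algebra.Polynomial"
begin

text \<open>Since \<lambda>(a Tr g) = 1 - 2[tr(a Tr g) \<noteq> 0], twice the weight of c(a) is |SL(n,q)| - S, where S
  is the sum of \<lambda>(a Tr g) over SL(n,q); and |SL(n,q)| = |GL(n,q)|/(q - 1) is obtained by counting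
  ordered bases row by row.

  Only upper triangular matrices contribute to S. If g is not upper triangular, take the leftmost
  column j having a nonzero entry g(i,j) below the diagonal; adding t times column j to column i
  keeps the determinant and this pivot, and moves the trace by t g(i,j), so the orbit of g under
  t in F_q contributes \<lambda>(a Tr g) times the sum over t of \<lambda>(a t g(i,j)), which is 0. An upper
  triangular matrix of determinant 1 is a free choice of the n choose 2 entries above the diagonal
  together with a diagonal y with product 1, so S = q^(n choose 2) times the sum of \<lambda>(a (y_1 + ...
  + y_n)) over such y. As n = 2^s, x \<mapsto> x^n is a field automorphism preserving tr, and
  z_k = (a y_k)^(1/n) turns this into the sum of \<lambda>(z_1 + ... + z_n) over z_1 ... z_n = a, which is
  K_(n-1)(\<lambda>; a) once the last coordinate is solved for.\<close>

section \<open>Characteristic two: Frobenius and the absolute trace\<close>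

lemma CHAR_eq_2_if_card_power_2:
  assumes "CARD('a::{field,finite}) = 2 ^ r"
  shows "CHAR('a) = 2"
proof -
  have "prime CHAR('a)"
    by (rule prime_CHAR_semidom) (simp add: finite_imp_CHAR_pos)
  moreover have "CHAR('a) dvd 2 ^ r"
    using CHAR_dvd_CARD[where 'a='a] assms by simp
  ultimately show ?thesis
    by (metis prime_dvd_power primes_dvd_imp_eq two_is_prime_nat)
qed

text \<open>The library's finite_field_power_card_eq_same needs the sort finite_field, which a type
  variable of sort {field,finite} does not have.\<close>
lemma power_card_eq_self:
  fixes x :: "'a::{field,finite}"
  shows "x ^ CARD('a) = x"
proof (cases "x = 0")
  case False
  let ?U = "UNIV - {0::'a}"
  have "bij_betw ((*) x) ?U ?U"
    by (rule bij_betwI[where g = "\<lambda>y. y / x"]) (use False in auto)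
  then have "(\<Prod>y\<in>?U. x * y) = \<Prod>?U"
    by (rule prod.reindex_bij_betw)
  then have "x ^ card ?U = 1"
    by (simp add: prod.distrib)
  have "CARD('a) = Suc (card ?U)"
    by (simp add: card_Diff_singleton_if Suc_diff_1 finite_UNIV_card_ge_0)
  then have "x ^ CARD('a) = x * x ^ card ?U"
    by (simp only: power_Suc)
  with \<open>x ^ card ?U = 1\<close> show ?thesis
    by simp
qed (simp add: finite_UNIV_card_ge_0)

lemma power_card_power_eq_self:
  fixes x :: "'a::{field,finite}"
  shows "x ^ (CARD('a) ^ k) = x"
proof (induction k)
  case (Suc k)
  then show ?case
    by (simp add: power_mult power_card_eq_self)
qed simp

lemma power_2_power_inverse:
  fixes x :: "'a::{field,finite}"
  assumes "CARD('a) = 2 ^ r" and "r \<ge> 1"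
  shows "(x ^ 2 ^ (r * s - s)) ^ 2 ^ s = x" and "(x ^ 2 ^ s) ^ 2 ^ (r * s - s) = x"
proof -
  have "(2::nat) ^ s * 2 ^ (r * s - s) = CARD('a) ^ s"
    using assms by (simp add: power_add[symmetric] power_mult[symmetric] mult.commute)
  then show "(x ^ 2 ^ (r * s - s)) ^ 2 ^ s = x" and "(x ^ 2 ^ s) ^ 2 ^ (r * s - s) = x"
    by (simp_all add: power_mult[symmetric] power_card_power_eq_self mult.commute)
qed

lemma abs_tr_add:
  fixes x y :: "'a::field"
  assumes "CHAR('a) = 2"
  shows "abs_tr r (x + y) = abs_tr r x + abs_tr r y"
  unfolding abs_tr_def using assms
  by (simp add: freshmans_dream'[where m = "2 ^ _"] sum.distrib)

lemma abs_tr_power_2: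
  fixes x :: "'a::{field,finite}"
  assumes "CARD('a) = 2 ^ r"
  shows "abs_tr r (x ^ 2) = abs_tr r x"
proof -
  have "abs_tr r (x ^ 2) = (\<Sum>i<r. x ^ (2 ^ Suc i))"
    unfolding abs_tr_def by (simp add: power_mult[symmetric] mult.commute)
  also have "\<dots> = (\<Sum>i<Suc r. x ^ (2 ^ i)) - x"
    by (subst sum.lessThan_Suc_shift) simp
  also have "\<dots> = abs_tr r x + x ^ (2 ^ r) - x"
    unfolding abs_tr_def by simp
  also have "x ^ (2 ^ r) = x"
    using power_card_eq_self[of x] assms by simp
  finally show ?thesis
    by simp
qed

lemma abs_tr_power_2_power:
  fixes x :: "'a::{field,finite}"
  assumes "CARD('a) = 2 ^ r"
  shows "abs_tr r (x ^ (2 ^ k)) = abs_tr r x"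
proof (induction k)
  case (Suc k)
  have "x ^ (2 ^ Suc k) = (x ^ (2 ^ k)) ^ 2"
    by (simp add: power_mult[symmetric] mult.commute)
  then show ?case
    using abs_tr_power_2[OF assms, of "x ^ (2 ^ k)"] Suc by simp
qed simp

lemma abs_tr_eq_0_or_1:
  fixes x :: "'a::{field,finite}"
  assumes "CARD('a) = 2 ^ r"
  shows "abs_tr r x = 0 \<or> abs_tr r x = 1"
proof -
  have "(abs_tr r x) ^ 2 = abs_tr r (x ^ 2)"
    unfolding abs_tr_def using CHAR_eq_2_if_card_power_2[OF assms]
    by (simp add: freshmans_dream_sum'[where n = 1] power_mult[symmetric] mult.commute)
  also have "\<dots> = abs_tr r x"
    by (rule abs_tr_power_2[OF assms])
  finally have "abs_tr r x * (abs_tr r x - 1) = 0"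
    by (simp add: power2_eq_square algebra_simps)
  then show ?thesis
    by auto
qed

text \<open>The trace is a polynomial of degree 2^(r-1) < q, so it cannot vanish on all of F_q.\<close>
lemma ex_abs_tr_neq_0:
  assumes "CARD('a::{field,finite}) = 2 ^ r" and "r \<ge> 1"
  shows "\<exists>x::'a. abs_tr r x \<noteq> 0"
proof (rule ccontr)
  assume tr_0: "\<not> ?thesis"
  define p :: "'a poly" where "p = (\<Sum>i<r. Polynomial.monom 1 (2 ^ i))"
  have "Polynomial.coeff p (2 ^ (r - 1)) = (\<Sum>i<r. if 2 ^ i = (2::nat) ^ (r - 1) then 1 else 0)"
    unfolding p_def by (simp add: coeff_sum coeff_monom)
  also have "\<dots> = (\<Sum>i\<in>{r - 1}. 1)"
    by (rule sum.mono_neutral_cong_right) (use assms(2) in auto)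
  finally have "p \<noteq> 0"
    by auto
  then have "card {x. poly p x = 0} \<le> Polynomial.degree p"
    by (rule card_poly_roots_bound)
  also have "Polynomial.degree p \<le> 2 ^ (r - 1)"
    unfolding p_def
    by (rule degree_sum_le) (auto intro!: order.trans[OF degree_monom_le] power_increasing)
  also have "{x. poly p x = 0} = (UNIV :: 'a set)"
    using tr_0 by (simp add: p_def poly_sum poly_monom abs_tr_def)
  finally have "CARD('a) \<le> 2 ^ (r - 1)" .
  moreover have "(2::nat) ^ (r - 1) < 2 ^ r"
    using assms(2) by simp
  ultimately show False
    using assms(1) by linarith
qed

lemma lam_add:
  fixes x y :: "'a::{field,finite}"
  assumes "CARD('a) = 2 ^ r"
  shows "lam r (x + y) = lam r x * lam r y"
proof -
  have "(1::'a) + 1 = 0"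
    using CHAR_eq_2_if_card_power_2[OF assms] by (metis of_nat_CHAR one_add_one of_nat_numeral)
  then show ?thesis
    unfolding lam_def abs_tr_add[OF CHAR_eq_2_if_card_power_2[OF assms]]
    using abs_tr_eq_0_or_1[OF assms, of x] abs_tr_eq_0_or_1[OF assms, of y] by auto
qed

lemma sum_lam_mult_eq_0:
  fixes c :: "'a::{field,finite}"
  assumes "CARD('a) = 2 ^ r" and "r \<ge> 1" and "c \<noteq> 0"
  shows "(\<Sum>t\<in>UNIV. lam r (c * t)) = 0"
proof -
  obtain x0 :: 'a where x0: "abs_tr r x0 \<noteq> 0"
    using ex_abs_tr_neq_0[OF assms(1,2)] by blast
  have "(\<Sum>t\<in>UNIV. lam r (c * t)) = (\<Sum>t\<in>UNIV. lam r (c * (t + x0 / c)))"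
    by (rule sum.reindex_bij_witness[of _ "\<lambda>t. t + x0 / c" "\<lambda>t. t - x0 / c"]) auto
  also have "\<dots> = - (\<Sum>t\<in>UNIV. lam r (c * t))"
    using assms(3) x0
    by (simp add: distrib_left lam_add[OF assms(1)] lam_def[of r x0] sum_negf)
  finally show ?thesis
    by simp
qed

section \<open>Reduction of trace sums to upper triangular matrices\<close>

text \<open>The index type carries no order, so triangularity is taken with respect to an injection
  ord of it into nat.\<close>
definition upper_tri :: "('n \<Rightarrow> nat) \<Rightarrow> 'a::zero^'n^'n \<Rightarrow> bool" where
  "upper_tri ord g \<longleftrightarrow> (\<forall>i j. ord j < ord i \<longrightarrow> g$i$j = 0)"

definition has_subdiag_entry :: "('n \<Rightarrow> nat) \<Rightarrow> 'a::zero^'n^'n \<Rightarrow> 'n \<Rightarrow> bool" where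
  "has_subdiag_entry ord g j \<longleftrightarrow> (\<exists>i. ord j < ord i \<and> g$i$j \<noteq> 0)"

definition pivot_col :: "('n \<Rightarrow> nat) \<Rightarrow> 'a::zero^'n^'n \<Rightarrow> 'n" where
  "pivot_col ord g =
     (SOME j. has_subdiag_entry ord g j \<and> (\<forall>j'. has_subdiag_entry ord g j' \<longrightarrow> ord j \<le> ord j'))"

definition pivot_row :: "('n \<Rightarrow> nat) \<Rightarrow> 'a::zero^'n^'n \<Rightarrow> 'n" where
  "pivot_row ord g = (SOME i. ord (pivot_col ord g) < ord i \<and> g $ i $ pivot_col ord g \<noteq> 0)"

text \<open>Adding t times column pivot_col to column pivot_row moves the trace by t times the pivot
  entry, but leaves every column up to pivot_col, and hence the pivot itself, unchanged.\<close>
definition pivot_shear :: "('n \<Rightarrow> nat) \<Rightarrow> 'a::comm_ring_1 \<Rightarrow> 'a^'n^'n \<Rightarrow> 'a^'n^'n" where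
  "pivot_shear ord t g =
     (\<chi> i j. g$i$j + (if j = pivot_row ord g then t * g $ i $ pivot_col ord g else 0))"

lemma pivot_col_least:
  assumes "\<not> upper_tri ord g"
  shows "has_subdiag_entry ord g (pivot_col ord g)"
    and "has_subdiag_entry ord g j \<Longrightarrow> ord (pivot_col ord g) \<le> ord j"
proof -
  obtain j0 where "has_subdiag_entry ord g j0"
    using assms by (auto simp: upper_tri_def has_subdiag_entry_def)
  then have "\<exists>j. has_subdiag_entry ord g j \<and> (\<forall>j'. has_subdiag_entry ord g j' \<longrightarrow> ord j \<le> ord j')"
    by (rule ex_has_least_nat)
  from someI_ex[OF this]
  show "has_subdiag_entry ord g (pivot_col ord g)"
    and "has_subdiag_entry ord g j \<Longrightarrow> ord (pivot_col ord g) \<le> ord j"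
    unfolding pivot_col_def by blast+
qed

lemma pivot_entry:
  assumes "\<not> upper_tri ord g"
  shows "ord (pivot_col ord g) < ord (pivot_row ord g)"
    and "g $ pivot_row ord g $ pivot_col ord g \<noteq> 0"
proof -
  have "\<exists>i. ord (pivot_col ord g) < ord i \<and> g $ i $ pivot_col ord g \<noteq> 0"
    using pivot_col_least(1)[OF assms] unfolding has_subdiag_entry_def .
  from someI_ex[OF this]
  show "ord (pivot_col ord g) < ord (pivot_row ord g)"
    and "g $ pivot_row ord g $ pivot_col ord g \<noteq> 0"
    unfolding pivot_row_def by blast+
qed

lemma pivot_cong:
  assumes "inj ord" and "\<not> upper_tri ord g"
    and same: "\<And>i j. ord j \<le> ord (pivot_col ord g) \<Longrightarrow> h$i$j = g$i$j"
  shows "\<not> upper_tri ord h"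
    and "pivot_col ord h = pivot_col ord g"
    and "pivot_row ord h = pivot_row ord g"
proof -
  let ?c = "pivot_col ord g"
  have subdiag_eq: "has_subdiag_entry ord h j = has_subdiag_entry ord g j" if "ord j \<le> ord ?c" for j
    using same[OF that] by (simp add: has_subdiag_entry_def)
  have h_c: "has_subdiag_entry ord h ?c"
    using subdiag_eq pivot_col_least(1)[OF assms(2)] by simp
  then show nu: "\<not> upper_tri ord h"
    by (auto simp: upper_tri_def has_subdiag_entry_def)
  have "ord ?c \<le> ord j" if "has_subdiag_entry ord h j" for j
    using subdiag_eq[of j] that pivot_col_least(2)[OF assms(2)] by fastforce
  then have "ord (pivot_col ord h) = ord ?c"
    using pivot_col_least[OF nu] h_c by (meson antisym)
  then show col: "pivot_col ord h = ?c"
    using assms(1) by (simp add: inj_eq)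
  show "pivot_row ord h = pivot_row ord g"
    unfolding pivot_row_def col using same[of ?c] by simp
qed

lemma pivot_shear_fixes_left_columns:
  assumes "\<not> upper_tri ord g" and "ord j \<le> ord (pivot_col ord g)"
  shows "pivot_shear ord t g $ i $ j = g $ i $ j"
  using pivot_entry(1)[OF assms(1)] assms(2) by (auto simp: pivot_shear_def)

lemma pivot_shear_pivot:
  assumes "inj ord" and "\<not> upper_tri ord g"
  shows "\<not> upper_tri ord (pivot_shear ord t g)"
    and "pivot_col ord (pivot_shear ord t g) = pivot_col ord g"
    and "pivot_row ord (pivot_shear ord t g) = pivot_row ord g"
  using pivot_cong[OF assms pivot_shear_fixes_left_columns[OF assms(2)]] by blast+

lemma pivot_shear_inverse:
  assumes "inj ord" and "\<not> upper_tri ord g"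
  shows "pivot_shear ord (- t) (pivot_shear ord t g) = g"
proof -
  have "pivot_shear ord t g $ i $ pivot_col ord g = g $ i $ pivot_col ord g" for i
    using pivot_shear_fixes_left_columns[OF assms(2)] by simp
  then show ?thesis
    using pivot_shear_pivot[OF assms]
    by (simp add: vec_eq_iff pivot_shear_def[of ord "- t" "pivot_shear ord t g"])
       (simp add: pivot_shear_def)
qed

lemma det_pivot_shear:
  fixes g :: "'a::comm_ring_1^'n::finite^'n"
  assumes "\<not> upper_tri ord g"
  shows "det (pivot_shear ord t g) = det g"
proof -
  let ?c = "pivot_col ord g" and ?p = "pivot_row ord g" and ?h = "transpose g"
  have "?p \<noteq> ?c"
    using pivot_entry(1)[OF assms] by auto
  have "pivot_shear ord t g
      = transpose (\<chi> k. if k = ?p then row ?p ?h + t *s row ?c ?h else row k ?h)"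
    by (simp add: vec_eq_iff pivot_shear_def transpose_def row_def)
  then have "det (pivot_shear ord t g)
      = det (\<chi> k. if k = ?p then row ?p ?h + t *s row ?c ?h else row k ?h)"
    by simp
  also have "\<dots> = det ?h"
    by (rule det_row_operation[OF \<open>?p \<noteq> ?c\<close>])
  finally show ?thesis
    by simp
qed

lemma trace_pivot_shear:
  "trace (pivot_shear ord t g) = trace g + t * g $ pivot_row ord g $ pivot_col ord g"
  by (simp add: trace_def pivot_shear_def sum.distrib)

lemma bij_betw_pivot_shear:
  fixes ord :: "'n::finite \<Rightarrow> nat" and d :: "'a::comm_ring_1"
  assumes "inj ord"
  defines "X \<equiv> {g::'a^'n^'n. det g = d \<and> \<not> upper_tri ord g}"
  shows "bij_betw (pivot_shear ord t) X X"
proof (rule bij_betwI[where g = "pivot_shear ord (- t)"])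
  have "pivot_shear ord s g \<in> X" if "g \<in> X" for s g
    using that det_pivot_shear[of ord g s] pivot_shear_pivot(1)[OF assms(1), of g s]
    by (simp add: X_def)
  then show "pivot_shear ord t \<in> X \<rightarrow> X" and "pivot_shear ord (- t) \<in> X \<rightarrow> X"
    by blast+
  fix g assume "g \<in> X"
  then have "\<not> upper_tri ord g"
    by (simp add: X_def)
  from pivot_shear_inverse[OF assms(1) this, of t] pivot_shear_inverse[OF assms(1) this, of "- t"]
  show "pivot_shear ord (- t) (pivot_shear ord t g) = g"
    and "pivot_shear ord t (pivot_shear ord (- t) g) = g"
    by simp_all
qed

lemma sum_not_upper_tri_eq_0:
  fixes \<psi> :: "'a::{comm_ring_1,finite} \<Rightarrow> int" and ord :: "'n::finite \<Rightarrow> nat"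
  assumes "inj ord"
    and \<psi>_add: "\<And>x y. \<psi> (x + y) = \<psi> x * \<psi> y"
    and \<psi>_sum: "\<And>c. c \<noteq> 0 \<Longrightarrow> (\<Sum>t\<in>UNIV. \<psi> (t * c)) = 0"
  shows "(\<Sum>g | det g = d \<and> \<not> upper_tri ord g. \<psi> (trace (g::'a^'n^'n))) = 0"
proof -
  define X where "X = {g::'a^'n^'n. det g = d \<and> \<not> upper_tri ord g}"
  define piv where "piv g = g $ pivot_row ord g $ pivot_col ord g" for g :: "'a^'n^'n"
  have shift: "(\<Sum>g\<in>X. \<psi> (trace g)) = (\<Sum>g\<in>X. \<psi> (trace g) * \<psi> (t * piv g))" for t
  proof -
    have "(\<Sum>g\<in>X. \<psi> (trace g)) = (\<Sum>g\<in>X. \<psi> (trace (pivot_shear ord t g)))"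
      using bij_betw_pivot_shear[OF assms(1)] unfolding X_def by (rule sum.reindex_bij_betw[symmetric])
    then show ?thesis
      by (simp add: trace_pivot_shear \<psi>_add piv_def)
  qed
  have "int CARD('a) * (\<Sum>g\<in>X. \<psi> (trace g))
      = (\<Sum>t\<in>UNIV. \<Sum>g\<in>X. \<psi> (trace g) * \<psi> (t * piv g))"
    by (simp flip: shift)
  also have "\<dots> = (\<Sum>g\<in>X. \<psi> (trace g) * (\<Sum>t\<in>UNIV. \<psi> (t * piv g)))"
    by (subst sum.swap) (simp add: sum_distrib_left)
  also have "\<dots> = 0"
  proof (rule sum.neutral, intro ballI)
    fix g assume "g \<in> X"
    then have "piv g \<noteq> 0"
      using pivot_entry(2)[of ord g] by (simp add: X_def piv_def)
    then show "\<psi> (trace g) * (\<Sum>t\<in>UNIV. \<psi> (t * piv g)) = 0"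
      by (simp add: \<psi>_sum)
  qed
  finally show ?thesis
    by (simp add: X_def)
qed

lemma sum_det_eq_sum_upper_tri:
  fixes \<psi> :: "'a::{comm_ring_1,finite} \<Rightarrow> int" and ord :: "'n::finite \<Rightarrow> nat"
  assumes "inj ord"
    and "\<And>x y. \<psi> (x + y) = \<psi> x * \<psi> y"
    and "\<And>c. c \<noteq> 0 \<Longrightarrow> (\<Sum>t\<in>UNIV. \<psi> (t * c)) = 0"
  shows "(\<Sum>g | det g = d. \<psi> (trace (g::'a^'n^'n)))
       = (\<Sum>g | det g = d \<and> upper_tri ord g. \<psi> (trace g))"
proof -
  have "{g::'a^'n^'n. det g = d}
      = {g. det g = d \<and> upper_tri ord g} \<union> {g. det g = d \<and> \<not> upper_tri ord g}"
    by auto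
  then show ?thesis
    using sum_not_upper_tri_eq_0[OF assms, of d] by (simp add: sum.union_disjoint Collect_conj_eq[symmetric])
qed

section \<open>Upper triangular matrices\<close>

lemma permutes_eq_id_if_ord_le:
  fixes ord :: "'n::finite \<Rightarrow> nat"
  assumes "p permutes UNIV" and "inj ord" and le: "\<And>i. ord i \<le> ord (p i)"
  shows "p = id"
proof -
  have "sum ord UNIV = sum (ord \<circ> p) UNIV"
    by (rule sum.permute[OF assms(1)])
  then have "ord (p i) = ord i" for i
    using sum_mono_inv[of ord UNIV "ord \<circ> p" i] le by simp
  then show ?thesis
    using assms(2) by (auto simp: inj_eq)
qed

lemma det_upper_tri:
  fixes g :: "'a::comm_ring_1^'n::finite^'n"
  assumes "inj ord" and "upper_tri ord g"
  shows "det g = (\<Prod>i\<in>UNIV. g$i$i)"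
proof -
  have "(\<Prod>i\<in>UNIV. g $ i $ p i) = 0" if p: "p permutes UNIV" "p \<noteq> id" for p
  proof -
    obtain i where "ord (p i) < ord i"
      using permutes_eq_id_if_ord_le[OF p(1) assms(1)] p(2) by (meson not_less)
    then have "g $ i $ p i = 0"
      using assms(2) by (simp add: upper_tri_def)
    then show ?thesis
      by (intro prod_zero) auto
  qed
  then have "det g = (\<Sum>p\<in>{id}. of_int (sign p) * (\<Prod>i\<in>UNIV. g $ i $ p i))"
    unfolding det_def by (intro sum.mono_neutral_right) (auto simp: permutes_id)
  then show ?thesis
    by (simp add: sign_id)
qed

lemma card_ord_less_pairs:
  fixes ord :: "'n::finite \<Rightarrow> nat"
  assumes "inj ord"
  shows "card {(i, j). ord i < ord j} = CARD('n) choose 2"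
proof -
  have "bij_betw (\<lambda>(i, j). {i, j}) {(i, j). ord i < ord j} {B. B \<subseteq> UNIV \<and> card B = 2}"
  proof (rule bij_betw_imageI)
    show "inj_on (\<lambda>(i, j). {i, j}) {(i, j). ord i < ord j}"
      by (auto simp: inj_on_def doubleton_eq_iff)
    show "(\<lambda>(i, j). {i, j}) ` {(i, j). ord i < ord j} = {B. B \<subseteq> UNIV \<and> card B = 2}"
    proof (intro equalityI subsetI)
      fix B :: "'n set" assume "B \<in> {B. B \<subseteq> UNIV \<and> card B = 2}"
      then obtain x y where B: "B = {x, y}" and "x \<noteq> y"
        by (auto simp: card_2_iff)
      then have "ord x < ord y \<or> ord y < ord x"
        using assms by (metis injD linorder_neqE_nat)
      then show "B \<in> (\<lambda>(i, j). {i, j}) ` {(i, j). ord i < ord j}"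
        unfolding B by (auto intro: rev_image_eqI[of "(x, y)"] rev_image_eqI[of "(y, x)"])
    qed (auto simp: card_insert_if)
  qed
  then show ?thesis
    using n_subsets[of "UNIV :: 'n set" 2] by (simp add: bij_betw_same_card)
qed

lemma card_upper_tri_diag:
  fixes ord :: "'n::finite \<Rightarrow> nat" and y :: "'n \<Rightarrow> 'a::{zero,finite}"
  assumes "inj ord"
  shows "card {g::'a^'n^'n. upper_tri ord g \<and> (\<lambda>i. g$i$i) = y} = CARD('a) ^ (CARD('n) choose 2)"
proof -
  define P where "P = {(i::'n, j). ord i < ord j}"
  define fill where "fill h = (\<chi> i j. if ord i < ord j then h (i, j) else if i = j then y i else 0)"
    for h :: "'n \<times> 'n \<Rightarrow> 'a"
  have "inj_on fill (P \<rightarrow>\<^sub>E UNIV)"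
  proof (rule inj_onI)
    fix h h' assume h: "h \<in> P \<rightarrow>\<^sub>E UNIV" and h': "h' \<in> P \<rightarrow>\<^sub>E UNIV" and "fill h = fill h'"
    show "h = h'"
    proof (rule PiE_ext[OF h h'])
      fix x assume "x \<in> P"
      then obtain i j where "x = (i, j)" and "ord i < ord j"
        by (auto simp: P_def)
      moreover have "fill h $ i $ j = fill h' $ i $ j"
        using \<open>fill h = fill h'\<close> by simp
      ultimately show "h x = h' x"
        by (simp add: fill_def)
    qed
  qed
  moreover have "fill ` (P \<rightarrow>\<^sub>E UNIV) = {g. upper_tri ord g \<and> (\<lambda>i. g$i$i) = y}"
  proof (intro equalityI subsetI)
    fix g :: "'a^'n^'n" assume "g \<in> {g. upper_tri ord g \<and> (\<lambda>i. g$i$i) = y}"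
    then have "g = fill (restrict (\<lambda>(i, j). g$i$j) P)"
      by (auto simp: vec_eq_iff fill_def P_def upper_tri_def)
        (metis assms injD linorder_neqE_nat)
    then show "g \<in> fill ` (P \<rightarrow>\<^sub>E UNIV)"
      by (metis (no_types, lifting) image_eqI restrict_PiE_iff UNIV_I)
  qed (auto simp: fill_def upper_tri_def)
  ultimately have "card {g::'a^'n^'n. upper_tri ord g \<and> (\<lambda>i. g$i$i) = y} = card (P \<rightarrow>\<^sub>E (UNIV::'a set))"
    by (metis card_image)
  also have "\<dots> = CARD('a) ^ card P"
    by (simp add: card_PiE)
  finally show ?thesis
    using card_ord_less_pairs[OF assms] by (simp add: P_def)
qed

lemma sum_upper_tri_by_diag:
  fixes f :: "('n::finite \<Rightarrow> 'a::{comm_ring_1,finite}) \<Rightarrow> int" and ord :: "'n \<Rightarrow> nat"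
  assumes "inj ord"
  shows "(\<Sum>g | det g = d \<and> upper_tri ord g. f (\<lambda>i. (g::'a^'n^'n) $ i $ i))
       = int CARD('a) ^ (CARD('n) choose 2) * (\<Sum>y | (\<Prod>i\<in>UNIV. y i) = d. f y)"
proof -
  let ?S = "{g::'a^'n^'n. det g = d \<and> upper_tri ord g}"
  have fibre: "{g. det g = d \<and> upper_tri ord g \<and> (\<lambda>i. g$i$i) = y}
      = {g. upper_tri ord g \<and> (\<lambda>i. g$i$i) = y}"
    if "(\<Prod>i\<in>UNIV. y i) = d" for y
    using that by (auto simp: det_upper_tri[OF assms])
  have "(\<Sum>g\<in>?S. f (\<lambda>i. g$i$i))
      = (\<Sum>y | (\<Prod>i\<in>UNIV. y i) = d. of_nat (card {g \<in> ?S. (\<lambda>i. g$i$i) = y}) * f y)"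
    by (rule sum_fun_comp) (auto simp: det_upper_tri[OF assms])
  also have "\<dots> = (\<Sum>y | (\<Prod>i\<in>UNIV. y i) = d. int CARD('a) ^ (CARD('n) choose 2) * f y)"
    by (intro sum.cong refl) (simp add: fibre card_upper_tri_diag[OF assms])
  finally show ?thesis
    by (simp add: sum_distrib_left)
qed

section \<open>Diagonal sums and Kloosterman sums\<close>

lemma sum_lam_prod_1_eq_sum_lam_prod:
  fixes a :: "'a::{field,finite}"
  assumes "CARD('a) = 2 ^ r" and "r \<ge> 1" and "CARD('n::finite) = 2 ^ s" and "a \<noteq> 0"
  shows "(\<Sum>y::'n \<Rightarrow> 'a | (\<Prod>i\<in>UNIV. y i) = 1. lam r (a * (\<Sum>i\<in>UNIV. y i)))
       = (\<Sum>z::'n \<Rightarrow> 'a | (\<Prod>i\<in>UNIV. z i) = a. lam r (\<Sum>i\<in>UNIV. z i))"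
proof -
  have char: "prime CHAR('a)" "CHAR('a) = 2"
    using CHAR_eq_2_if_card_power_2[OF assms(1)] by simp_all
  define fr where "fr x = x ^ 2 ^ s" for x :: 'a
  define rt where "rt x = x ^ 2 ^ (r * s - s)" for x :: 'a
  have fr_rt: "fr (rt x) = x" and rt_fr: "rt (fr x) = x" for x
    unfolding fr_def rt_def using power_2_power_inverse[OF assms(1,2)] by simp_all
  have rt_sum: "rt (\<Sum>i\<in>UNIV. z i) = (\<Sum>i\<in>UNIV. rt (z i))" for z :: "'n \<Rightarrow> 'a"
    unfolding rt_def using char by (simp add: freshmans_dream_sum')
  have lam_rt: "lam r (rt x) = lam r x" for x
    unfolding rt_def lam_def using char(2) abs_tr_power_2_power[OF assms(1)] by simp
  have fr_a: "fr a = a ^ CARD('n)"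
    by (simp add: fr_def assms(3))
  show ?thesis
  proof (rule sum.reindex_bij_witness[where j = "\<lambda>y i. rt (a * y i)" and i = "\<lambda>z i. fr (z i) / a"])
    fix y :: "'n \<Rightarrow> 'a" assume y: "y \<in> {y. (\<Prod>i\<in>UNIV. y i) = 1}"
    show "(\<lambda>i. fr (rt (a * y i)) / a) = y"
      using assms(4) by (simp add: fr_rt)
    have "(\<Prod>i\<in>UNIV. rt (a * y i)) = rt (\<Prod>i\<in>UNIV. a * y i)"
      by (simp add: rt_def prod_power_distrib)
    also have "\<dots> = a"
      using y by (simp add: prod.distrib fr_a[symmetric] rt_fr)
    finally show "(\<lambda>i. rt (a * y i)) \<in> {z. (\<Prod>i\<in>UNIV. z i) = a}"
      by simp
    show "lam r (\<Sum>i\<in>UNIV. rt (a * y i)) = lam r (a * (\<Sum>i\<in>UNIV. y i))"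
      by (simp add: rt_sum[symmetric] lam_rt sum_distrib_left)
  next
    fix z :: "'n \<Rightarrow> 'a" assume z: "z \<in> {z. (\<Prod>i\<in>UNIV. z i) = a}"
    show "(\<lambda>i. rt (a * (fr (z i) / a))) = z"
      using assms(4) by (simp add: rt_fr)
    have "(\<Prod>i\<in>UNIV. fr (z i) / a) = fr (\<Prod>i\<in>UNIV. z i) / a ^ CARD('n)"
      by (simp add: fr_def prod_power_distrib prod_dividef)
    also have "\<dots> = 1"
      using z assms(4) by (simp add: fr_a)
    finally show "(\<lambda>i. fr (z i) / a) \<in> {y. (\<Prod>i\<in>UNIV. y i) = 1}"
      by simp
  qed
qed

lemma sum_prod_eq_reindex_nat:
  fixes e :: "nat \<Rightarrow> 'n::finite" and F :: "'a::comm_semiring_1 \<Rightarrow> 'b::comm_monoid_add"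
  assumes e: "bij_betw e {..<n} UNIV"
  shows "(\<Sum>z::'n \<Rightarrow> 'a | (\<Prod>i\<in>UNIV. z i) = c. F (\<Sum>i\<in>UNIV. z i))
       = (\<Sum>w \<in> {w \<in> {..<n} \<rightarrow>\<^sub>E UNIV. (\<Prod>k<n. w k) = c}. F (\<Sum>k<n. w k))"
proof -
  let ?e' = "inv_into {..<n} e"
  have e'_e: "?e' (e k) = k" if "k < n" for k
    using e that by (simp add: bij_betw_inv_into_left)
  have e_e': "e (?e' x) = x" for x
    using e by (simp add: bij_betw_inv_into_right)
  have e'_less: "?e' x < n" for x
    using bij_betw_apply[OF bij_betw_inv_into[OF e]] by simp
  have sum_e: "(\<Sum>k<n. h (e k)) = (\<Sum>i\<in>UNIV. h i)" for h :: "'n \<Rightarrow> 'a"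
    by (rule sum.reindex_bij_betw[OF e])
  have prod_e: "(\<Prod>k<n. h (e k)) = (\<Prod>i\<in>UNIV. h i)" for h :: "'n \<Rightarrow> 'a"
    by (rule prod.reindex_bij_betw[OF e])
  show ?thesis
  proof (rule sum.reindex_bij_witness[where j = "\<lambda>z. restrict (z \<circ> e) {..<n}" and i = "\<lambda>w x. w (?e' x)"])
    fix z :: "'n \<Rightarrow> 'a"
    have restrict_z: "(\<Sum>k<n. restrict (z \<circ> e) {..<n} k) = (\<Sum>i\<in>UNIV. z i)"
      "(\<Prod>k<n. restrict (z \<circ> e) {..<n} k) = (\<Prod>i\<in>UNIV. z i)"
      by (simp_all add: sum_e prod_e)
    show "(\<lambda>x. restrict (z \<circ> e) {..<n} (?e' x)) = z"
      by (simp add: e'_less e_e')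
    show "F (\<Sum>k<n. restrict (z \<circ> e) {..<n} k) = F (\<Sum>i\<in>UNIV. z i)"
      by (simp only: restrict_z)
    assume "z \<in> {z. (\<Prod>i\<in>UNIV. z i) = c}"
    then show "restrict (z \<circ> e) {..<n} \<in> {w \<in> {..<n} \<rightarrow>\<^sub>E UNIV. (\<Prod>k<n. w k) = c}"
      by (simp add: prod_e)
  next
    fix w assume "w \<in> {w \<in> {..<n} \<rightarrow>\<^sub>E UNIV. (\<Prod>k<n. w k) = c}"
    then have w: "w \<in> {..<n} \<rightarrow>\<^sub>E UNIV" and prod_w: "(\<Prod>k<n. w k) = c"
      by blast+
    show "restrict ((\<lambda>x. w (?e' x)) \<circ> e) {..<n} = w"
    proof
      fix k
      show "restrict ((\<lambda>x. w (?e' x)) \<circ> e) {..<n} k = w k"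
        using w by (cases "k < n") (simp_all add: e'_e PiE_arb[OF w])
    qed
    have "(\<Prod>i\<in>UNIV. w (?e' i)) = (\<Prod>k<n. w (?e' (e k)))"
      by (rule prod_e[symmetric])
    also have "\<dots> = (\<Prod>k<n. w k)"
      by (rule prod.cong) (simp_all add: e'_e)
    also have "\<dots> = c"
      by (rule prod_w)
    finally show "(\<lambda>x. w (?e' x)) \<in> {z. (\<Prod>i\<in>UNIV. z i) = c}"
      by simp
  qed
qed

lemma sum_prod_eq_kloosterman:
  fixes a :: "'a::{field,finite}"
  assumes "a \<noteq> 0"
  shows "(\<Sum>w \<in> {w \<in> {..<Suc m} \<rightarrow>\<^sub>E UNIV. (\<Prod>k<Suc m. w k) = a}. lam r (\<Sum>k<Suc m. w k))
       = kloosterman r m a"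
  unfolding kloosterman_def
proof (rule sum.reindex_bij_witness[where j = "\<lambda>w. restrict w {..<m}"
      and i = "\<lambda>\<alpha>. \<alpha>(m := a * inverse (\<Prod>k<m. \<alpha> k))"])
  fix w assume "w \<in> {w \<in> {..<Suc m} \<rightarrow>\<^sub>E UNIV. (\<Prod>k<Suc m. w k) = a}"
  then have w: "w \<in> {..<Suc m} \<rightarrow>\<^sub>E UNIV" and "(\<Prod>k<Suc m. w k) = a"
    by blast+
  then have prod_w: "(\<Prod>k<m. w k) * w m = a"
    by simp
  then have prod_w_nz: "(\<Prod>k<m. w k) \<noteq> 0"
    using assms by auto
  then have last: "w m = a * inverse (\<Prod>k<m. w k)"
    using prod_w by (simp add: field_simps)
  show "(restrict w {..<m})(m := a * inverse (\<Prod>k<m. restrict w {..<m} k)) = w"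
  proof
    fix k
    show "((restrict w {..<m})(m := a * inverse (\<Prod>k<m. restrict w {..<m} k))) k = w k"
      using last PiE_arb[OF w, of k] by (cases "k < Suc m") auto
  qed
  show "restrict w {..<m} \<in> {..<m} \<rightarrow>\<^sub>E UNIV - {0}"
    using prod_w_nz by auto
  show "lam r ((\<Sum>k<m. restrict w {..<m} k) + a * inverse (\<Prod>k<m. restrict w {..<m} k))
      = lam r (\<Sum>k<Suc m. w k)"
    using last by simp
next
  fix \<alpha> :: "nat \<Rightarrow> 'a" assume \<alpha>: "\<alpha> \<in> {..<m} \<rightarrow>\<^sub>E UNIV - {0}"
  then have "(\<Prod>k<m. \<alpha> k) \<noteq> 0"
    by auto
  moreover have "\<alpha>(m := v) \<in> {..<Suc m} \<rightarrow>\<^sub>E UNIV" for v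
    using \<alpha> by (auto simp: PiE_iff extensional_def)
  ultimately show "\<alpha>(m := a * inverse (\<Prod>k<m. \<alpha> k))
      \<in> {w \<in> {..<Suc m} \<rightarrow>\<^sub>E UNIV. (\<Prod>k<Suc m. w k) = a}"
    by simp
  show "restrict (\<alpha>(m := a * inverse (\<Prod>k<m. \<alpha> k))) {..<m} = \<alpha>"
  proof
    fix k
    show "restrict (\<alpha>(m := a * inverse (\<Prod>k<m. \<alpha> k))) {..<m} k = \<alpha> k"
      using PiE_arb[OF \<alpha>, of k] by (cases "k < m") auto
  qed
qed

section \<open>The order of SL(n,q)\<close>

definition indep_family :: "'i set \<Rightarrow> ('i \<Rightarrow> 'a::field^'n) \<Rightarrow> bool" where
  "indep_family S f \<longleftrightarrow> (\<forall>c. (\<Sum>i\<in>S. c i *s f i) = 0 \<longrightarrow> (\<forall>i\<in>S. c i = 0))"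

definition span_family :: "'i set \<Rightarrow> ('i \<Rightarrow> 'a::field^'n) \<Rightarrow> ('a^'n) set" where
  "span_family S f = (\<lambda>c. \<Sum>i\<in>S. c i *s f i) ` (S \<rightarrow>\<^sub>E UNIV)"

lemma indep_family_cong:
  "(\<And>i. i \<in> S \<Longrightarrow> f i = g i) \<Longrightarrow> indep_family S f = indep_family S g"
  unfolding indep_family_def by (metis (no_types, lifting) sum.cong)

lemma span_family_cong:
  "(\<And>i. i \<in> S \<Longrightarrow> f i = g i) \<Longrightarrow> span_family S f = span_family S g"
  unfolding span_family_def by (metis (no_types, lifting) sum.cong)

lemma card_span_family:
  fixes f :: "'i \<Rightarrow> 'a::{field,finite}^'n::finite"
  assumes "finite S" and "indep_family S f"
  shows "card (span_family S f) = CARD('a) ^ card S"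
proof -
  have "inj_on (\<lambda>c. \<Sum>i\<in>S. c i *s f i) (S \<rightarrow>\<^sub>E UNIV)"
  proof (rule inj_onI)
    fix c d :: "'i \<Rightarrow> 'a"
    assume c: "c \<in> S \<rightarrow>\<^sub>E UNIV" and d: "d \<in> S \<rightarrow>\<^sub>E UNIV"
      and "(\<Sum>i\<in>S. c i *s f i) = (\<Sum>i\<in>S. d i *s f i)"
    then have "(\<Sum>i\<in>S. (c i - d i) *s f i) = 0"
      by (simp add: vector_sub_rdistrib sum_subtractf)
    then have "\<forall>i\<in>S. c i - d i = 0"
      using spec[OF assms(2)[unfolded indep_family_def], of "\<lambda>i. c i - d i"] by blast
    then show "c = d"
      by (intro PiE_ext[OF c d]) simp
  qed
  then have "card (span_family S f) = card (S \<rightarrow>\<^sub>E (UNIV :: 'a set))"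
    unfolding span_family_def by (rule card_image)
  also have "\<dots> = CARD('a) ^ card S"
    using assms(1) by (simp add: card_PiE)
  finally show ?thesis .
qed

lemma mem_span_family_if_dependent:
  fixes f :: "'i \<Rightarrow> 'a::field^'n::finite"
  assumes "finite S" and "x \<notin> S"
    and sum_0: "(\<Sum>i\<in>insert x S. c i *s f i) = 0" and "c x \<noteq> 0"
  shows "f x \<in> span_family S f"
proof -
  have "c x *s f x = - (\<Sum>i\<in>S. c i *s f i)"
    using sum_0 assms(1,2) by (simp add: eq_neg_iff_add_eq_0)
  then have "f x = inverse (c x) *s (- (\<Sum>i\<in>S. c i *s f i))"
    using \<open>c x \<noteq> 0\<close> by (metis vector_smult_assoc vector_smult_lid left_inverse)
  also have "\<dots> = (\<Sum>i\<in>S. (- c i / c x) *s f i)"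
    by (simp add: vec.scale_sum_right vector_smult_assoc divide_inverse mult.commute sum_negf)
  also have "\<dots> = (\<Sum>i\<in>S. restrict (\<lambda>i. - c i / c x) S i *s f i)"
    by (intro sum.cong) auto
  finally show ?thesis
    unfolding span_family_def
    by (rule image_eqI[where x = "restrict (\<lambda>i. - c i / c x) S"]) auto
qed

lemma indep_family_insert:
  fixes f :: "'i \<Rightarrow> 'a::field^'n::finite"
  assumes "finite S" and "x \<notin> S"
  shows "indep_family (insert x S) f \<longleftrightarrow> indep_family S f \<and> f x \<notin> span_family S f"
proof -
  have sum_insert: "(\<Sum>i\<in>insert x S. c i *s f i) = c x *s f x + (\<Sum>i\<in>S. c i *s f i)" for c
    using assms by (simp add: sum.insert)
  have sum_upd: "(\<Sum>i\<in>S. (c(x := v)) i *s f i) = (\<Sum>i\<in>S. c i *s f i)" for c v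
    using assms(2) by (intro sum.cong) auto
  show ?thesis
  proof safe
    assume indep: "indep_family (insert x S) f"
    show "indep_family S f"
      unfolding indep_family_def
    proof (intro allI impI ballI)
      fix c i assume "(\<Sum>i\<in>S. c i *s f i) = 0" and "i \<in> S"
      then have "(\<Sum>j\<in>insert x S. (c(x := 0)) j *s f j) = 0"
        by (simp only: sum_insert sum_upd) simp
      then show "c i = 0"
        using indep \<open>i \<in> S\<close> assms(2) unfolding indep_family_def
        by (metis fun_upd_other insertCI)
    qed
    assume "f x \<in> span_family S f"
    then obtain c where "f x = (\<Sum>i\<in>S. c i *s f i)"
      unfolding span_family_def by blast
    then have "(\<Sum>j\<in>insert x S. (c(x := -1)) j *s f j) = 0"
      by (simp only: sum_insert sum_upd) simp
    then have "(c(x := -1)) x = 0"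
      using indep unfolding indep_family_def by blast
    then show False
      by simp
  next
    assume indep: "indep_family S f" and "f x \<notin> span_family S f"
    show "indep_family (insert x S) f"
      unfolding indep_family_def
    proof (intro allI impI)
      fix c assume sum_0: "(\<Sum>i\<in>insert x S. c i *s f i) = 0"
      then have "c x = 0"
        using mem_span_family_if_dependent[OF assms] \<open>f x \<notin> span_family S f\<close> by blast
      then have "(\<Sum>i\<in>S. c i *s f i) = 0"
        using sum_0 by (simp add: sum_insert)
      then show "\<forall>i\<in>insert x S. c i = 0"
        using indep \<open>c x = 0\<close> unfolding indep_family_def by blast
    qed
  qed
qed

definition indep_families :: "'i set \<Rightarrow> ('i \<Rightarrow> 'a::field^'n) set" where
  "indep_families S = {f \<in> S \<rightarrow>\<^sub>E UNIV. indep_family S f}"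

lemma indep_families_insert:
  fixes S :: "'i set"
  assumes "finite S" and "x \<notin> S"
  shows "indep_families (insert x S) = (\<lambda>(f, v). f(x := v)) `
           (SIGMA f : indep_families S. UNIV - span_family S (f :: 'i \<Rightarrow> 'a::field^'n::finite))"
proof (intro equalityI subsetI)
  fix h :: "'i \<Rightarrow> 'a^'n" assume "h \<in> indep_families (insert x S)"
  then have h: "h \<in> insert x S \<rightarrow>\<^sub>E UNIV" and "indep_family (insert x S) h"
    by (simp_all add: indep_families_def)
  then have "indep_family S h" and "h x \<notin> span_family S h"
    using indep_family_insert[OF assms] by blast+
  then have "(restrict h S, h x) \<in> (SIGMA f : indep_families S. UNIV - span_family S f)"
    using indep_family_cong[of S "restrict h S" h] span_family_cong[of S "restrict h S" h]
    by (simp add: indep_families_def)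
  moreover have "h = (\<lambda>(f, v). f(x := v)) (restrict h S, h x)"
  proof
    fix y
    show "h y = (\<lambda>(f, v). f(x := v)) (restrict h S, h x) y"
      using PiE_arb[OF h, of y] by (cases "y \<in> insert x S") auto
  qed
  ultimately show "h \<in> (\<lambda>(f, v). f(x := v)) ` (SIGMA f : indep_families S. UNIV - span_family S f)"
    by (rule rev_image_eqI)
next
  fix h :: "'i \<Rightarrow> 'a^'n"
  assume "h \<in> (\<lambda>(f, v). f(x := v)) ` (SIGMA f : indep_families S. UNIV - span_family S f)"
  then obtain f v where f: "f \<in> S \<rightarrow>\<^sub>E UNIV" "indep_family S f"
    and v: "v \<notin> span_family S f" and h: "h = f(x := v)"
    by (auto simp: indep_families_def)
  have agree: "(f(x := v)) i = f i" if "i \<in> S" for i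
    using that assms(2) by auto
  have "indep_family (insert x S) (f(x := v))"
    using f(2) v indep_family_insert[OF assms, of "f(x := v)"]
    by (simp add: indep_family_cong[OF agree] span_family_cong[OF agree])
  moreover have "f(x := v) \<in> insert x S \<rightarrow>\<^sub>E UNIV"
    using f(1) by (rule PiE_fun_upd[rotated]) simp
  ultimately show "h \<in> indep_families (insert x S)"
    by (simp add: indep_families_def h)
qed

lemma inj_on_fun_upd_pairs:
  assumes "x \<notin> S"
  shows "inj_on (\<lambda>(f, v). f(x := v)) ((S \<rightarrow>\<^sub>E A) \<times> B)"
proof (rule inj_onI, clarify)
  fix f v f' v'
  assume f: "f \<in> S \<rightarrow>\<^sub>E A" and f': "f' \<in> S \<rightarrow>\<^sub>E A" and eq: "f(x := v) = f'(x := v')"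
  have "f = f'"
    using eq assms by (intro PiE_ext[OF f f']) (metis fun_upd_other)
  moreover have "v = v'"
    using eq by (metis fun_upd_same)
  ultimately show "f = f' \<and> v = v'" ..
qed

lemma card_indep_families:
  assumes "finite S"
  shows "card (indep_families S :: ('i \<Rightarrow> 'a::{field,finite}^'n::finite) set)
       = (\<Prod>k<card S. CARD('a) ^ CARD('n) - CARD('a) ^ k)"
  using assms
proof (induction S rule: finite_induct)
  case empty
  then show ?case
    by (simp add: indep_families_def indep_family_def)
next
  case (insert x S)
  let ?L = "indep_families S :: ('i \<Rightarrow> 'a^'n) set"
  have "?L \<subseteq> S \<rightarrow>\<^sub>E UNIV"
    by (auto simp: indep_families_def)
  have "inj_on (\<lambda>(f, v). f(x := v)) (SIGMA f : ?L. UNIV - span_family S f)"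
    by (rule inj_on_subset[OF inj_on_fun_upd_pairs[OF insert(2), of UNIV UNIV]])
      (use \<open>?L \<subseteq> S \<rightarrow>\<^sub>E UNIV\<close> in blast)
  then have "card (indep_families (insert x S) :: ('i \<Rightarrow> 'a^'n) set)
      = card (SIGMA f : ?L. UNIV - span_family S f)"
    by (simp add: indep_families_insert[OF insert(1,2)] card_image)
  also have "\<dots> = (\<Sum>f \<in> ?L. card (UNIV - span_family S f))"
  proof (rule card_SigmaI)
    have "finite (S \<rightarrow>\<^sub>E (UNIV :: ('a^'n) set))"
      using insert(1) by (simp add: finite_PiE)
    then show "finite ?L"
      using \<open>?L \<subseteq> S \<rightarrow>\<^sub>E UNIV\<close> by (rule finite_subset[rotated])
  qed simp
  also have "\<dots> = (\<Sum>f \<in> ?L. CARD('a) ^ CARD('n) - CARD('a) ^ card S)"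
    by (intro sum.cong refl)
      (simp add: card_Diff_subset card_span_family insert(1) indep_families_def)
  finally show ?case
    using insert by simp
qed

lemma card_GL:
  "card {g :: 'a::{field,finite}^'n::finite^'n. det g \<noteq> 0}
     = (\<Prod>k<CARD('n). CARD('a) ^ CARD('n) - CARD('a) ^ k)"
proof -
  have det_iff: "det g \<noteq> 0 \<longleftrightarrow> indep_family UNIV (($) g)" for g :: "'a^'n^'n"
    by (simp add: indep_family_def row_def invertible_det_nz[symmetric]
        invertible_right_inverse matrix_right_invertible_independent_rows)
  have "bij_betw vec_nth {g :: 'a^'n^'n. det g \<noteq> 0} (indep_families UNIV)"
    by (rule bij_betwI[where g = vec_lambda])
      (auto simp: det_iff vec_lambda_inverse indep_families_def)
  then show ?thesis
    using card_indep_families[of "UNIV :: 'n set"] by (simp add: bij_betw_same_card)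
qed

lemma card_det_eq_card_SL:
  fixes d :: "'a::{field,finite}"
  assumes "d \<noteq> 0"
  shows "card {g::'a^'n::finite^'n. det g = d} = card {g::'a^'n^'n. det g = 1}"
proof -
  define scale where "scale c g = (\<chi> i. if i = undefined then c *s g $ i else g $ i)"
    for c :: 'a and g :: "'a^'n^'n"
  have det_scale: "det (scale c g) = c * det g" for c g
    using det_row_mul[of undefined c "($) g" "($) g"] by (simp add: scale_def)
  have scale_scale: "scale c (scale c' g) = scale (c * c') g" and scale_1: "scale 1 g = g" for c c' g
    by (simp_all add: scale_def vec_eq_iff)
  have "bij_betw (scale (inverse d)) {g. det g = d} {g. det g = 1}"
    by (rule bij_betwI[where g = "scale d"]) (use assms in \<open>auto simp: det_scale scale_scale scale_1\<close>)
  then show ?thesis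
    by (rule bij_betw_same_card)
qed

lemma card_GL_eq_card_SL:
  "card {g::'a::{field,finite}^'n::finite^'n. det g \<noteq> 0} = (CARD('a) - 1) * card {g::'a^'n^'n. det g = 1}"
proof -
  have "{g::'a^'n^'n. det g \<noteq> 0} = (\<Union>d \<in> UNIV - {0}. {g. det g = d})"
    by auto
  then have "card {g::'a^'n^'n. det g \<noteq> 0} = (\<Sum>d \<in> UNIV - {0}. card {g::'a^'n^'n. det g = d})"
    by (simp only:) (rule card_UN_disjoint, auto)
  also have "\<dots> = (\<Sum>d \<in> (UNIV :: 'a set) - {0}. card {g::'a^'n^'n. det g = 1})"
    by (rule sum.cong) (auto intro: card_det_eq_card_SL)
  also have "\<dots> = (CARD('a) - 1) * card {g::'a^'n^'n. det g = 1}"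
    by (simp add: card_Diff_subset)
  finally show ?thesis .
qed

lemma prod_power_diff_power:
  fixes Q :: "'a::comm_ring_1"
  shows "(\<Prod>i<m. Q ^ m - Q ^ i) = Q ^ (m choose 2) * (\<Prod>j\<in>{1..m}. Q ^ j - 1)"
proof -
  have sum_less: "(\<Sum>i<m. i) = m choose 2"
    by (induction m) (simp_all add: numeral_2_eq_2)
  have "(\<Prod>i<m. Q ^ m - Q ^ i) = (\<Prod>i<m. Q ^ i * (Q ^ (m - i) - 1))"
    by (rule prod.cong) (auto simp: algebra_simps simp flip: power_add)
  also have "\<dots> = Q ^ (m choose 2) * (\<Prod>i<m. Q ^ (m - i) - 1)"
    by (simp add: prod.distrib power_sum[symmetric] sum_less)
  also have "(\<Prod>i<m. Q ^ (m - i) - 1) = (\<Prod>j\<in>{1..m}. Q ^ j - 1)"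
    by (rule prod.reindex_bij_witness[where i = "\<lambda>j. m - j" and j = "\<lambda>i. m - i"]) auto
  finally show ?thesis .
qed

lemma card_SL:
  "int (card {g::'a::{field,finite}^'n::finite^'n. det g = 1})
     = int CARD('a) ^ (CARD('n) choose 2) * (\<Prod>j\<in>{2..CARD('n)}. int CARD('a) ^ j - 1)"
proof -
  let ?q = "CARD('a)" and ?n = "CARD('n)"
  have q: "2 \<le> ?q"
    using card_mono[of "UNIV :: 'a set" "{0, 1}"] by simp
  have "(int ?q - 1) * int (card {g::'a^'n^'n. det g = 1}) = int (card {g::'a^'n^'n. det g \<noteq> 0})"
    using q by (simp add: card_GL_eq_card_SL of_nat_diff)
  also have "\<dots> = (\<Prod>i<?n. int ?q ^ ?n - int ?q ^ i)"
    using q by (simp add: card_GL of_nat_diff power_increasing)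
  also have "\<dots> = int ?q ^ (?n choose 2) * (\<Prod>j\<in>{1..?n}. int ?q ^ j - 1)"
    by (rule prod_power_diff_power)
  also have "{1..?n} = insert 1 {2..?n}"
    using finite_UNIV_card_ge_0[where 'a = 'n] by auto
  also have "(\<Prod>j\<in>insert 1 {2..?n}. int ?q ^ j - 1) = (int ?q - 1) * (\<Prod>j\<in>{2..?n}. int ?q ^ j - 1)"
    by simp
  finally show ?thesis
    using q by simp
qed

section \<open>The weight of c(a)\<close>

theorem sum_SL_lam_trace:
  fixes a :: "'a::{field,finite}"
  assumes "CARD('a) = 2 ^ r" and "r \<ge> 1" and "CARD('n::finite) = 2 ^ s" and "a \<noteq> 0"
  shows "(\<Sum>g \<in> SL. lam r (a * trace (g::'a^'n^'n)))
       = int CARD('a) ^ (CARD('n) choose 2) * kloosterman r (CARD('n) - 1) a"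
proof -
  let ?n = "CARD('n)"
  obtain e :: "nat \<Rightarrow> 'n" where e: "bij_betw e {..<?n} UNIV"
    using ex_bij_betw_nat_finite[of "UNIV :: 'n set"] by (auto simp: atLeast0LessThan)
  define ord where "ord = inv_into {..<?n} e"
  have "inj ord"
    unfolding ord_def using e by (simp add: bij_betw_def inj_on_inv_into)
  have \<psi>_add: "lam r (a * (x + y)) = lam r (a * x) * lam r (a * y)" for x y
    by (simp add: distrib_left lam_add[OF assms(1)])
  have \<psi>_sum: "(\<Sum>t\<in>UNIV. lam r (a * (t * c))) = 0" if "c \<noteq> 0" for c
    using sum_lam_mult_eq_0[OF assms(1,2), of "a * c"] that assms(4) by (simp add: ac_simps)
  have "(\<Sum>g \<in> SL. lam r (a * trace (g::'a^'n^'n)))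
      = (\<Sum>g | det g = 1 \<and> upper_tri ord g. lam r (a * trace (g::'a^'n^'n)))"
    unfolding SL_def
    by (rule sum_det_eq_sum_upper_tri[OF \<open>inj ord\<close>, where \<psi> = "\<lambda>t. lam r (a * t)"])
      (use \<psi>_add \<psi>_sum in simp_all)
  also have "\<dots> = int CARD('a) ^ (?n choose 2)
      * (\<Sum>y::'n \<Rightarrow> 'a | (\<Prod>i\<in>UNIV. y i) = 1. lam r (a * (\<Sum>i\<in>UNIV. y i)))"
    using sum_upper_tri_by_diag[OF \<open>inj ord\<close>, where d = 1 and f = "\<lambda>y. lam r (a * (\<Sum>i\<in>UNIV. y i))"]
    by (simp add: trace_def)
  also have "(\<Sum>y::'n \<Rightarrow> 'a | (\<Prod>i\<in>UNIV. y i) = 1. lam r (a * (\<Sum>i\<in>UNIV. y i)))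
      = (\<Sum>z::'n \<Rightarrow> 'a | (\<Prod>i\<in>UNIV. z i) = a. lam r (\<Sum>i\<in>UNIV. z i))"
    by (rule sum_lam_prod_1_eq_sum_lam_prod[OF assms])
  also have "\<dots> = (\<Sum>w \<in> {w \<in> {..<?n} \<rightarrow>\<^sub>E UNIV. (\<Prod>k<?n. w k) = a}. lam r (\<Sum>k<?n. w k))"
    by (rule sum_prod_eq_reindex_nat[OF e])
  also have "\<dots> = kloosterman r (?n - 1) a"
    using sum_prod_eq_kloosterman[OF assms(4), where m = "?n - 1" and r = r]
    by (simp only: Suc_diff_1[OF zero_less_card_finite])
  finally show ?thesis .
qed

lemma two_codeword_weight:
  "2 * int (codeword_weight r a TYPE('a::{field,finite}^'n::finite^'n))
     = int (card (SL :: ('a^'n^'n) set)) - (\<Sum>g \<in> SL. lam r (a * trace (g::'a^'n^'n)))"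
proof -
  have "(\<Sum>g \<in> SL. lam r (a * trace (g::'a^'n^'n)))
      = (\<Sum>g \<in> SL. 1 - 2 * of_bool (abs_tr r (a * trace (g::'a^'n^'n)) \<noteq> 0))"
    by (intro sum.cong refl) (simp add: lam_def)
  also have "\<dots> = int (card (SL :: ('a^'n^'n) set)) - 2 * int (codeword_weight r a TYPE('a^'n^'n))"
    by (simp add: sum_subtractf sum_distrib_left[symmetric] codeword_weight_def Int_def)
  finally show ?thesis
    by simp
qed

theorem proposition10:
  fixes a :: "'a::{field,finite}" and s r :: nat
  assumes "s \<ge> 1" and "r \<ge> 1"
    and "CARD('a) = 2 ^ r"
    and "CARD('n::finite) = 2 ^ s"
    and "a \<noteq> 0"
  shows "let n = CARD('n); q = CARD('a);
             N = (int q) ^ (n choose 2) * (\<Prod>j\<in>{2..n}. (int q ^ j - 1))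
         in 2 * int (codeword_weight r a TYPE('a^'n^'n))
              = N - (int q) ^ (n choose 2) * kloosterman r (n - 1) a"
proof -
  have "2 * int (codeword_weight r a TYPE('a^'n^'n))
      = int (card (SL :: ('a^'n^'n) set)) - (\<Sum>g \<in> SL. lam r (a * trace (g::'a^'n^'n)))"
    by (rule two_codeword_weight)
  then show ?thesis
    using sum_SL_lam_trace[OF assms(3,2,4,5)] card_SL[where 'a = 'a and 'n = 'n]
    by (simp add: Let_def SL_def)
qed

end
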